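(* Let $A,B,P,Q\in\mathbb{R}[x]$, and consider the following two conditions. $C_1$: for all $\lambda,\rho>0$, both $(\lambda A+\rho B,\ \lambda P+\rho Q)$ and $(\lambda B+\rho xA,\ \lambda Q+\rho xP)$ are interpolatory 1-cubes. $C_2$: for all $\kappa,\pi>0$, both $(\kappa A+\pi P,\ \kappa B+\pi Q)$ and $(\kappa P+\pi xA,\ \kappa Q+\pi xB)$ are interpolatory 1-cubes. Then $C_1$ and $C_2$ are equivalent.
   Context: A polynomial in $\mathbb{R}[x]$ is standard if it is identically $0$ or has positive leading coefficient. It has only nonpositive zeros if it is identically $0$ or all its zeros are real and $\le0$. Relation $\prec$: for $A,B$ with only real zeros, with zeros $\xi_1\le\cdots\le\xi_a$ of $A$ and $\theta_1\le\cdots\le\theta_b$ of $B$, $A\prec B$ means one of the following: - $\deg B=\deg A+1$ and $\theta_1\le\xi_1\le\theta_2\le\cdots\le\xi_a\le\theta_{a+1}$; - $\deg A=\deg B$ and $\xi_1\le\theta_1\le\cdots\le\xi_a\le\theta_a$. By convention $A\prec0$ and $0\prec A$ for any $A$ with only real zeros. An interpolatory 1-cube is a pair $(A,B)$ of standard polynomials with only nonpositive zeros such that $A\prec B$. *)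

theory Defs
  imports "HOL-Computational_Algebra.Polynomial"
begin

definition standard :: "real poly \<Rightarrow> bool" where
  "standard p \<longleftrightarrow> p = 0 \<or> lead_coeff p > 0"

definition real_rooted :: "real poly \<Rightarrow> bool" where
  "real_rooted p \<longleftrightarrow> p = 0 \<or>
     (\<exists>xs. p = smult (lead_coeff p) (\<Prod>x\<leftarrow>xs. [:-x, 1:]))"

definition nonpos_rooted :: "real poly \<Rightarrow> bool" where
  "nonpos_rooted p \<longleftrightarrow> p = 0 \<or>
     (\<exists>xs. (\<forall>x\<in>set xs. x \<le> 0) \<and> p = smult (lead_coeff p) (\<Prod>x\<leftarrow>xs. [:-x, 1:]))"

definition zero_list :: "real poly \<Rightarrow> real list" where
  "zero_list p = (SOME xs. sorted xs \<and> p = smult (lead_coeff p) (\<Prod>x\<leftarrow>xs. [:-x, 1:]))"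

definition interlaces :: "real poly \<Rightarrow> real poly \<Rightarrow> bool" (infix "\<prec>" 50) where
  "A \<prec> B \<longleftrightarrow> real_rooted A \<and> real_rooted B \<and>
     (A = 0 \<or> B = 0 \<or>
      (let xs = zero_list A; ts = zero_list B in
        (degree B = degree A + 1 \<and>
           (\<forall>i < length xs. ts ! i \<le> xs ! i \<and> xs ! i \<le> ts ! (i + 1)))
      \<or> (degree A = degree B \<and>
           (\<forall>i < length xs. xs ! i \<le> ts ! i) \<and>
           (\<forall>i. i + 1 < length xs \<longrightarrow> ts ! i \<le> xs ! (i + 1)))))"

definition interp_1cube :: "real poly \<Rightarrow> real poly \<Rightarrow> bool" where
  "interp_1cube A B \<longleftrightarrow> standard A \<and> standard B \<and> nonpos_rooted A \<and> nonpos_rooted B \<and> A \<prec> B"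

end

theory Submission
  imports Defs "HOL-Computational_Algebra.Fundamental_Theorem_Algebra" "HOL-Analysis.Analysis"
begin

text \<open>
  The key is a characterisation of interpolatory 1-cubes: \<open>(F, G)\<close> is one iff for all
  \<open>k, l > 0\<close> both \<open>k F + l G\<close> and \<open>k G + l x F\<close> are standard with only nonpositive zeros.
  Applied to the two cubes of \<open>C\<^sub>1\<close>, it turns \<open>C\<^sub>1\<close> into the statement that for all positive
  \<open>\<lambda>, \<rho>, \<kappa>, \<pi>\<close> the four polynomials
  \<open>\<kappa>\<lambda>A + \<kappa>\<rho>B + \<pi>\<lambda>P + \<pi>\<rho>Q\<close>, \<open>\<kappa>\<lambda>B + \<kappa>\<rho>xA + \<pi>\<lambda>Q + \<pi>\<rho>xP\<close>,
  \<open>\<kappa>\<lambda>P + \<kappa>\<rho>Q + \<pi>\<lambda>xA + \<pi>\<rho>xB\<close> and \<open>\<kappa>\<lambda>Q + \<kappa>\<rho>xP + \<pi>\<lambda>xB + \<pi>\<rho>x\<^sup>2A\<close>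
  are standard with only nonpositive zeros. This condition is invariant under exchanging
  \<open>(B, \<lambda>, \<rho>)\<close> with \<open>(P, \<kappa>, \<pi>)\<close>, which exchanges \<open>C\<^sub>1\<close> and \<open>C\<^sub>2\<close>.

  For the characterisation, let \<open>\<Theta>(z)\<close>, for \<open>Im z > 0\<close>, be the argument of \<open>G(z)\<close> minus that
  of \<open>F(z)\<close>, measured as a sum of the angles of \<open>z - r\<close> over the zeros \<open>r\<close>. Interlacing gives
  \<open>0 \<le> \<Theta> \<le> arg z < \<pi>\<close>, so no positive combination of \<open>F, G\<close> or of \<open>G, x F\<close> vanishes off
  the real axis. Conversely, if none vanishes there, \<open>\<Theta>\<close> and \<open>\<Theta> - arg z\<close> never reach
  \<open>\<plusminus>\<pi>\<close>, hence stay in \<open>(-\<pi>, \<pi>)\<close> by connectedness; at a real point \<open>x\<close> their boundary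
  values count the zeros of \<open>G\<close> minus those of \<open>F\<close> above \<open>x\<close>, and the resulting bounds
  force interlacing. That \<open>F\<close> and \<open>G\<close> themselves have only nonpositive zeros follows by
  a Hurwitz-type limit argument.
\<close>

section \<open>Real polynomials on the complex plane\<close>

declare mult_pCons_left [simp del]

abbreviation cpoly :: "real poly \<Rightarrow> complex poly" where
  "cpoly p \<equiv> map_poly complex_of_real p"

abbreviation linear_prod :: "real list \<Rightarrow> real poly" where
  "linear_prod xs \<equiv> \<Prod>x\<leftarrow>xs. [:-x, 1:]"

lemma cpoly_mult: "cpoly (p * q) = cpoly p * cpoly q"
  by (rule poly_eqI) (simp add: coeff_map_poly coeff_mult)

lemma poly_cpoly_add [simp]: "poly (cpoly (p + q)) z = poly (cpoly p) z + poly (cpoly q) z"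
proof -
  have "cpoly (p + q) = cpoly p + cpoly q"
    by (rule poly_eqI) (simp add: coeff_map_poly)
  then show ?thesis by simp
qed

lemma poly_cpoly_smult [simp]: "poly (cpoly (smult c p)) z = of_real c * poly (cpoly p) z"
  by (simp add: map_poly_smult)

lemma poly_cpoly_mult [simp]: "poly (cpoly (p * q)) z = poly (cpoly p) z * poly (cpoly q) z"
  by (simp add: cpoly_mult)

lemma poly_cpoly_pCons [simp]: "poly (cpoly (pCons a p)) z = of_real a + z * poly (cpoly p) z"
  by (simp add: map_poly_pCons)

lemma poly_cpoly_of_real [simp]: "poly (cpoly p) (of_real x) = of_real (poly p x)"
  by (induction p) (simp_all add: map_poly_pCons)

lemma poly_cpoly_cnj: "poly (cpoly p) (cnj z) = cnj (poly (cpoly p) z)"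
  by (induction p) (simp_all add: map_poly_pCons)

lemma poly_cpoly_linear_prod: "poly (cpoly (linear_prod xs)) z = (\<Prod>x\<leftarrow>xs. z - of_real x)"
  by (induction xs) (simp_all add: map_poly_pCons)

lemma lead_coeff_linear_prod: "lead_coeff (linear_prod xs) = 1"
  by (induction xs) (simp_all add: lead_coeff_mult)

lemma degree_linear_prod: "degree (linear_prod xs) = length xs"
proof (induction xs)
  case (Cons x xs)
  have "linear_prod xs \<noteq> 0" using lead_coeff_linear_prod[of xs] by auto
  with Cons show ?case by (simp add: degree_mult_eq)
qed simp

lemma poly_linear_prod_eq_0_iff: "poly (linear_prod xs) x = 0 \<longleftrightarrow> x \<in> set xs"
  by (induction xs) auto

lemma linear_prod_sort: "linear_prod (sort xs) = linear_prod xs"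
proof -
  have "mset (map (\<lambda>x. [:-x, 1:]) (sort xs)) = mset (map (\<lambda>x. [:-x, 1:]) xs)" by simp
  from arg_cong[OF this, of prod_mset] show ?thesis by (simp only: prod_mset_prod_list)
qed

lemma coeff_linear_prod_nonneg:
  assumes "\<forall>x\<in>set xs. x \<le> 0"
  shows "coeff (linear_prod xs) i \<ge> 0"
  using assms
proof (induction xs arbitrary: i)
  case Nil
  then show ?case by (cases i) auto
next
  case (Cons x xs)
  have "x * coeff (linear_prod xs) i \<le> 0" using Cons by (simp add: mult_nonpos_nonneg)
  moreover have "coeff (linear_prod xs) (i - 1) \<ge> 0" using Cons by simp
  ultimately show ?case by (cases i) (simp_all add: mult_pCons_left)
qed

lemma real_factorization:
  assumes "\<forall>z. poly (cpoly p) z = 0 \<longrightarrow> Im z = 0"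
  shows "\<exists>xs. p = smult (lead_coeff p) (linear_prod xs)"
  using assms
proof (induction "degree p" arbitrary: p)
  case 0
  then obtain c where "p = [:c:]" by (metis degree_eq_zeroE)
  then show ?case by (intro exI[of _ "[]"]) simp
next
  case (Suc n)
  have "\<not> constant (poly (cpoly p))"
    using Suc.hyps(2) by (simp add: constant_degree degree_map_poly)
  then obtain z where z: "poly (cpoly p) z = 0" using fundamental_theorem_of_algebra by blast
  with Suc.prems have "z = of_real (Re z)" by (simp add: complex_eq_iff)
  with z have "poly p (Re z) = 0" by (metis of_real_eq_0_iff poly_cpoly_of_real)
  then obtain q where p: "p = [:-Re z, 1:] * q" by (metis dvdE poly_eq_0_iff_dvd)
  moreover have "p \<noteq> 0" using Suc.hyps(2) by auto
  ultimately have "q \<noteq> 0" "degree q = n" using Suc.hyps(2) by (auto simp: degree_mult_eq)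
  moreover have "\<forall>w. poly (cpoly q) w = 0 \<longrightarrow> Im w = 0"
    using Suc.prems by (simp add: p map_poly_pCons)
  ultimately obtain ys where ys: "q = smult (lead_coeff q) (linear_prod ys)"
    using Suc.hyps(1) by blast
  define c where "c = lead_coeff q"
  have q: "q = smult c (linear_prod ys)" unfolding c_def by (rule ys)
  have "lead_coeff p = c" by (simp add: p lead_coeff_mult c_def)
  moreover have "p = smult c (linear_prod (Re z # ys))" by (simp add: p q)
  ultimately show ?case by (intro exI[of _ "Re z # ys"]) (simp only:)
qed

lemma nonpos_rooted_iff:
  "nonpos_rooted p \<longleftrightarrow> p = 0 \<or> (\<forall>z. poly (cpoly p) z = 0 \<longrightarrow> Im z = 0 \<and> Re z \<le> 0)"
proof (cases "p = 0")
  case False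
  show ?thesis
  proof
    assume "nonpos_rooted p"
    then obtain xs where xs: "\<forall>x\<in>set xs. x \<le> 0" "p = smult (lead_coeff p) (linear_prod xs)"
      using False unfolding nonpos_rooted_def by blast
    have "Im z = 0 \<and> Re z \<le> 0" if "poly (cpoly p) z = 0" for z
    proof -
      have "(\<Prod>x\<leftarrow>xs. z - of_real x) = 0"
        using that False by (subst (asm) xs(2)) (simp add: poly_cpoly_linear_prod)
      then obtain x where "x \<in> set xs" "z = of_real x" by (induction xs) auto
      with xs(1) show ?thesis by simp
    qed
    then show "p = 0 \<or> (\<forall>z. poly (cpoly p) z = 0 \<longrightarrow> Im z = 0 \<and> Re z \<le> 0)" by blast
  next
    assume "p = 0 \<or> (\<forall>z. poly (cpoly p) z = 0 \<longrightarrow> Im z = 0 \<and> Re z \<le> 0)"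
    with False have roots: "\<forall>z. poly (cpoly p) z = 0 \<longrightarrow> Im z = 0 \<and> Re z \<le> 0" by blast
    then obtain xs where xs: "p = smult (lead_coeff p) (linear_prod xs)"
      using real_factorization by blast
    have "x \<le> 0" if "x \<in> set xs" for x
    proof -
      have "poly p x = 0" using that by (subst xs) (simp add: poly_linear_prod_eq_0_iff)
      then show ?thesis using roots[rule_format, of "of_real x"] by simp
    qed
    with xs show "nonpos_rooted p" unfolding nonpos_rooted_def by blast
  qed
qed (simp add: nonpos_rooted_def)

lemma nonpos_rooted_iff_upper_half_plane:
  "nonpos_rooted p \<longleftrightarrow>
     p = 0 \<or> ((\<forall>z. Im z > 0 \<longrightarrow> poly (cpoly p) z \<noteq> 0) \<and> (\<forall>x>0. poly p x \<noteq> 0))"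
proof -
  have "(\<forall>z. poly (cpoly p) z = 0 \<longrightarrow> Im z = 0 \<and> Re z \<le> 0) \<longleftrightarrow>
        (\<forall>z. Im z > 0 \<longrightarrow> poly (cpoly p) z \<noteq> 0) \<and> (\<forall>x>0. poly p x \<noteq> 0)"
    (is "?roots \<longleftrightarrow> ?upper \<and> ?pos")
  proof
    assume ?roots
    then show "?upper \<and> ?pos"
      by (metis Im_complex_of_real Re_complex_of_real less_numeral_extra(3) not_le
          of_real_0 poly_cpoly_of_real)
  next
    assume "?upper \<and> ?pos"
    show ?roots
    proof (intro allI impI)
      fix z
      assume root: "poly (cpoly p) z = 0"
      have "poly (cpoly p) (cnj z) = 0" using root by (simp add: poly_cpoly_cnj)
      with root \<open>?upper \<and> ?pos\<close> have "\<not> Im z > 0" "\<not> Im (cnj z) > 0" by blast+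
      then have "Im z = 0" by simp
      then have "z = of_real (Re z)" by (simp add: complex_eq_iff)
      with root have "poly p (Re z) = 0" by (metis of_real_eq_0_iff poly_cpoly_of_real)
      with \<open>?upper \<and> ?pos\<close> \<open>Im z = 0\<close> show "Im z = 0 \<and> Re z \<le> 0" by (meson not_le)
    qed
  qed
  then show ?thesis by (simp add: nonpos_rooted_iff)
qed

lemma nonpos_rooted_smult: "c \<noteq> 0 \<Longrightarrow> nonpos_rooted (smult c p) \<longleftrightarrow> nonpos_rooted p"
  by (simp add: nonpos_rooted_iff_upper_half_plane)

lemma nonpos_rooted_X_mult: "nonpos_rooted p \<Longrightarrow> nonpos_rooted ([:0, 1:] * p)"
  by (auto simp: nonpos_rooted_iff_upper_half_plane)

abbreviation standard_nonpos :: "real poly \<Rightarrow> bool" where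
  "standard_nonpos p \<equiv> standard p \<and> nonpos_rooted p"

lemma nonpos_rooted_imp_real_rooted: "nonpos_rooted p \<Longrightarrow> real_rooted p"
  unfolding nonpos_rooted_def real_rooted_def by blast

lemma zero_list:
  assumes "real_rooted p" "p \<noteq> 0"
  shows "sorted (zero_list p)" and "p = smult (lead_coeff p) (linear_prod (zero_list p))"
proof -
  obtain xs where xs: "p = smult (lead_coeff p) (linear_prod xs)"
    using assms unfolding real_rooted_def by blast
  have "\<exists>ys. sorted ys \<and> p = smult (lead_coeff p) (linear_prod ys)"
    using xs sorted_sort unfolding linear_prod_sort[of xs, symmetric] by blast
  then have "sorted (zero_list p) \<and> p = smult (lead_coeff p) (linear_prod (zero_list p))"
    unfolding zero_list_def by (rule someI_ex)
  then show "sorted (zero_list p)" "p = smult (lead_coeff p) (linear_prod (zero_list p))"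
    by blast+
qed

lemma length_zero_list:
  assumes "real_rooted p" "p \<noteq> 0"
  shows "length (zero_list p) = degree p"
proof -
  have "degree p = degree (smult (lead_coeff p) (linear_prod (zero_list p)))"
    using zero_list(2)[OF assms] by (rule arg_cong)
  with assms(2) show ?thesis by (simp add: degree_linear_prod)
qed

lemma poly_cpoly_zero_list:
  assumes "real_rooted p" "p \<noteq> 0"
  shows "poly (cpoly p) z = of_real (lead_coeff p) * (\<Prod>x\<leftarrow>zero_list p. z - of_real x)"
proof -
  have "poly (cpoly p) z = poly (cpoly (smult (lead_coeff p) (linear_prod (zero_list p)))) z"
    using zero_list(2)[OF assms] by (rule arg_cong)
  then show ?thesis by (simp add: poly_cpoly_linear_prod)
qed

lemma zero_list_nonpos:
  assumes "nonpos_rooted p" "p \<noteq> 0" "x \<in> set (zero_list p)"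
  shows "x \<le> 0"
proof -
  have "poly (cpoly p) (of_real x) = 0"
    using assms
    by (subst poly_cpoly_zero_list) (auto simp: nonpos_rooted_imp_real_rooted prod_list_zero_iff)
  with assms(1,2) show ?thesis
    unfolding nonpos_rooted_iff_upper_half_plane
    by (metis not_le of_real_eq_0_iff poly_cpoly_of_real)
qed

definition interlaced :: "real list \<Rightarrow> real list \<Rightarrow> bool" where
  "interlaced xs ts \<longleftrightarrow>
     (length ts = length xs + 1 \<and> (\<forall>i < length xs. ts ! i \<le> xs ! i \<and> xs ! i \<le> ts ! (i + 1)))
   \<or> (length ts = length xs \<and> (\<forall>i < length xs. xs ! i \<le> ts ! i) \<and>
       (\<forall>i. i + 1 < length xs \<longrightarrow> ts ! i \<le> xs ! (i + 1)))"

lemma interlaces_iff_interlaced: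
  fixes F G :: "real poly"
  assumes "real_rooted F" "real_rooted G" "F \<noteq> 0" "G \<noteq> 0"
  shows "F \<prec> G \<longleftrightarrow> interlaced (zero_list F) (zero_list G)"
  using assms by (auto simp: interlaces_def interlaced_def length_zero_list Let_def)

lemma coeff_X_mult:
  fixes p :: "real poly"
  shows "coeff ([:0, 1:] * p) i = (if i = 0 then 0 else coeff p (i - 1))"
  by (cases i) (simp_all add: mult_pCons_left)

lemma standard_if_coeffs_nonneg: "\<forall>i. coeff p i \<ge> 0 \<Longrightarrow> standard p"
  unfolding standard_def by (metis leading_coeff_0_iff order_le_less)

lemma coeffs_nonneg_if_standard_nonpos:
  assumes "standard_nonpos p"
  shows "coeff p i \<ge> 0"
proof (cases "p = 0")
  case False
  define c where "c = lead_coeff p"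
  obtain xs where "\<forall>x\<in>set xs. x \<le> 0" "p = smult c (linear_prod xs)"
    using assms False unfolding nonpos_rooted_def c_def by blast
  moreover have "c > 0" using assms False unfolding standard_def c_def by simp
  ultimately show ?thesis by (simp add: coeff_linear_prod_nonneg)
qed simp

lemma poly_pos_if_coeffs_nonneg:
  fixes x :: real
  assumes "p \<noteq> 0" "\<forall>i. coeff p i \<ge> 0" "x > 0"
  shows "poly p x > 0"
proof -
  have "0 < lead_coeff p * x ^ degree p"
    using assms standard_if_coeffs_nonneg[of p] unfolding standard_def by simp
  also have "\<dots> \<le> (\<Sum>i\<le>degree p. coeff p i * x ^ i)"
    by (rule member_le_sum) (use assms in auto)
  finally show ?thesis by (simp add: poly_altdef)
qed

section \<open>Arguments in the upper half-plane\<close>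

text \<open>For \<open>Im w \<ge> 0\<close> this is \<open>Arg w\<close>, but unlike \<open>Arg\<close> it is continuous on the whole
  punctured plane (it equals \<open>\<bar>Arg w\<bar>\<close>), so sums of such angles extend continuously to the
  real points that are not zeros.\<close>
definition ang :: "complex \<Rightarrow> real" where
  "ang w = arccos (Re w / cmod w)"

lemma Re_div_cmod_bounds: "-1 \<le> Re w / cmod w \<and> Re w / cmod w \<le> 1"
  using abs_Re_le_cmod[of w] by (cases "w = 0") (auto simp: abs_le_iff divide_le_eq le_divide_eq)

lemma ang_eq_Arg:
  assumes "Im w \<ge> 0" "w \<noteq> 0"
  shows "ang w = Arg w"
proof -
  have "w = of_real (cmod w) * cis (Arg w)"
    using Arg_eq[OF assms(2)] by (simp add: cis_conv_exp)
  then have "Re w = Re (of_real (cmod w) * cis (Arg w))" by (rule arg_cong)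
  then have "Re w = cmod w * cos (Arg w)" by simp
  then have "Re w / cmod w = cos (Arg w)" using assms(2) by simp
  moreover have "0 \<le> Arg w" "Arg w \<le> pi" using assms(1) Arg_less_0 Arg_le_pi by auto
  ultimately show ?thesis by (simp add: ang_def arccos_cos)
qed

lemma ang_polar:
  assumes "Im w \<ge> 0" "w \<noteq> 0"
  shows "w = of_real (cmod w) * cis (ang w)"
  using Arg_eq[OF assms(2)] by (simp add: ang_eq_Arg[OF assms] cis_conv_exp)

lemma ang_bounds: "Im w > 0 \<Longrightarrow> 0 < ang w \<and> ang w < pi"
  using ang_eq_Arg[of w] Arg_lt_pi[of w] by force

lemma ang_of_real: "x \<noteq> 0 \<Longrightarrow> ang (of_real x) = (if x < 0 then pi else 0)"
  by (simp add: ang_eq_Arg)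

lemma continuous_on_ang: "continuous_on (- {0}) ang"
  unfolding ang_def[abs_def]
  by (intro continuous_on_arccos continuous_intros) (auto simp: Re_div_cmod_bounds)

lemma div_sqrt_mono:
  fixes u v y :: real
  assumes "y \<noteq> 0" "v \<le> u"
  shows "v / sqrt (v\<^sup>2 + y\<^sup>2) \<le> u / sqrt (u\<^sup>2 + y\<^sup>2)"
proof -
  have nonneg_case: "b * sqrt (a\<^sup>2 + y\<^sup>2) \<le> a * sqrt (b\<^sup>2 + y\<^sup>2)" if "0 \<le> b" "b \<le> a" for a b
  proof (rule power2_le_imp_le)
    have "b\<^sup>2 * y\<^sup>2 \<le> a\<^sup>2 * y\<^sup>2" using that by (intro mult_right_mono power_mono) auto
    then show "(b * sqrt (a\<^sup>2 + y\<^sup>2))\<^sup>2 \<le> (a * sqrt (b\<^sup>2 + y\<^sup>2))\<^sup>2"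
      by (simp add: power_mult_distrib algebra_simps)
  qed (use that in simp)
  have "v * sqrt (u\<^sup>2 + y\<^sup>2) \<le> u * sqrt (v\<^sup>2 + y\<^sup>2)"
  proof (cases "0 \<le> v")
    case False
    show ?thesis
    proof (cases "0 \<le> u")
      case True
      with False have "v * sqrt (u\<^sup>2 + y\<^sup>2) \<le> 0" "0 \<le> u * sqrt (v\<^sup>2 + y\<^sup>2)"
        by (simp_all add: mult_nonpos_nonneg)
      then show ?thesis by linarith
    next
      case False
      then show ?thesis using nonneg_case[of "-u" "-v"] assms(2) by simp
    qed
  qed (use nonneg_case assms(2) in blast)
  moreover have "sqrt (t\<^sup>2 + y\<^sup>2) > 0" for t using assms(1) by (simp add: add_nonneg_pos)
  ultimately show ?thesis by (simp add: divide_simps)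
qed

lemma ang_diff_mono:
  assumes "Im z > 0" "r \<le> s"
  shows "ang (z - of_real r) \<le> ang (z - of_real s)"
proof -
  have "Re (z - of_real s) / cmod (z - of_real s) \<le> Re (z - of_real r) / cmod (z - of_real r)"
    using div_sqrt_mono[of "Im z" "Re z - s" "Re z - r"] assms by (simp add: cmod_def)
  then show ?thesis
    using Re_div_cmod_bounds[of "z - of_real r"] Re_div_cmod_bounds[of "z - of_real s"]
    unfolding ang_def by (intro arccos_le_arccos) auto
qed

definition arg_sum :: "real list \<Rightarrow> complex \<Rightarrow> real" where
  "arg_sum xs z = (\<Sum>x\<leftarrow>xs. ang (z - of_real x))"

lemma arg_sum_simps [simp]:
  "arg_sum [] z = 0"
  "arg_sum (x # xs) z = ang (z - of_real x) + arg_sum xs z"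
  by (simp_all add: arg_sum_def)

lemma prod_linear_polar:
  assumes "Im z > 0"
  shows "\<exists>r>0. (\<Prod>x\<leftarrow>xs. z - of_real x) = of_real r * cis (arg_sum xs z)"
proof (induction xs)
  case Nil
  show ?case by (intro exI[of _ 1]) simp
next
  case (Cons x xs)
  then obtain r where r: "r > 0" "(\<Prod>x\<leftarrow>xs. z - of_real x) = of_real r * cis (arg_sum xs z)"
    by blast
  define w where "w = z - of_real x"
  have "Im w > 0" using assms by (simp add: w_def)
  then have "w \<noteq> 0" by auto
  with \<open>Im w > 0\<close> have w: "w = of_real (cmod w) * cis (ang w)" "cmod w > 0"
    using ang_polar[of w] by auto
  have "(\<Prod>x\<leftarrow>x # xs. z - of_real x) = w * (of_real r * cis (arg_sum xs z))"
    by (simp add: w_def r(2))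
  also have "\<dots> = of_real (cmod w * r) * cis (arg_sum (x # xs) z)"
    by (subst w(1)) (simp add: w_def cis_mult mult_ac add.commute)
  finally show ?case using r(1) w(2) by (intro exI[of _ "cmod w * r"]) simp
qed

lemma arg_sum_of_real:
  "x \<notin> set xs \<Longrightarrow> arg_sum xs (of_real x) = pi * length (filter ((<) x) xs)"
  by (induction xs) (auto simp: ang_of_real algebra_simps simp flip: of_real_diff)

lemma continuous_on_arg_sum:
  assumes "\<forall>x\<in>set xs. of_real x \<notin> S"
  shows "continuous_on S (arg_sum xs)"
  using assms
proof (induction xs)
  case (Cons x xs)
  have "continuous_on S (\<lambda>z. ang (z - of_real x))"
    using Cons.prems
    by (intro continuous_on_compose2[OF continuous_on_ang] continuous_intros) auto
  with Cons show ?case by (simp add: continuous_on_add)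
qed simp

definition arg_diff :: "real list \<Rightarrow> real list \<Rightarrow> complex \<Rightarrow> real" where
  "arg_diff xs ts z = arg_sum ts z - arg_sum xs z"

lemma arg_diff_of_real:
  assumes "x \<notin> set xs" "x \<notin> set ts"
  shows "arg_diff xs ts (of_real x) =
    pi * (real (length (filter ((<) x) ts)) - real (length (filter ((<) x) xs)))"
  using assms by (simp add: arg_diff_def arg_sum_of_real algebra_simps)

section \<open>Interlacing bounds the argument difference\<close>

lemma cis_combination_neq_0:
  assumes "r1 > 0" "r2 > 0" "\<bar>s1 - s2\<bar> < pi"
  shows "of_real r1 * cis s1 + of_real r2 * cis s2 \<noteq> 0"
proof
  assume "of_real r1 * cis s1 + of_real r2 * cis s2 = 0"
  then have "(of_real r1 * cis s1 + of_real r2 * cis s2) * cis (- s2) = 0" by simp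
  then have "of_real r1 * cis (s1 - s2) + of_real r2 = 0"
    by (simp add: distrib_right mult.assoc cis_mult)
  then have "r1 * sin (s1 - s2) = 0" "r1 * cos (s1 - s2) + r2 = 0"
    by (simp_all add: complex_eq_iff)
  then have "s1 - s2 = 0" using assms sin_eq_0_pi[of "s1 - s2"] by auto
  with \<open>r1 * cos (s1 - s2) + r2 = 0\<close> assms(1,2) show False by simp
qed

lemma cis_combination_eq_0:
  assumes "\<bar>s1 - s2\<bar> = pi" "r1 > 0" "r2 > 0"
  shows "\<exists>c>0. of_real r1 * cis s1 + of_real c * (of_real r2 * cis s2) = 0"
proof -
  have "s1 - s2 = pi \<or> s1 - s2 = - pi" using assms(1) by linarith
  then have "cis (s1 - s2) = -1" by (auto simp: complex_eq_iff)
  moreover have "cis s1 = cis s2 * cis (s1 - s2)" by (simp add: cis_mult)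
  ultimately have "cis s1 = - cis s2" by simp
  with assms(2,3) show ?thesis by (intro exI[of _ "r1 / r2"]) simp
qed

lemma poly_cpoly_polar:
  assumes "real_rooted p" "lead_coeff p > 0" "Im z > 0"
  shows "\<exists>r>0. poly (cpoly p) z = of_real r * cis (arg_sum (zero_list p) z)"
proof -
  obtain r where "r > 0" "(\<Prod>x\<leftarrow>zero_list p. z - of_real x) = of_real r * cis (arg_sum (zero_list p) z)"
    using prod_linear_polar[OF assms(3)] by blast
  moreover have "p \<noteq> 0" using assms(2) by auto
  ultimately show ?thesis using assms(1,2)
    by (intro exI[of _ "lead_coeff p * r"]) (simp add: poly_cpoly_zero_list)
qed

lemma poly_cpoly_X_polar:
  assumes "real_rooted p" "lead_coeff p > 0" "Im z > 0"
  shows "\<exists>r>0. poly (cpoly ([:0, 1:] * p)) z = of_real r * cis (arg_sum (zero_list p) z + ang z)"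
proof -
  obtain r where r: "r > 0" "poly (cpoly p) z = of_real r * cis (arg_sum (zero_list p) z)"
    using poly_cpoly_polar[OF assms] by blast
  have "z \<noteq> 0" using assms(3) by auto
  then have z: "z = of_real (cmod z) * cis (ang z)" using ang_polar assms(3) by simp
  have "poly (cpoly ([:0, 1:] * p)) z = of_real (cmod z) * cis (ang z) * poly (cpoly p) z"
    using arg_cong[OF z, of "\<lambda>w. w * poly (cpoly p) z"] by simp
  also have "\<dots> = of_real (cmod z * r) * cis (arg_sum (zero_list p) z + ang z)"
    by (simp add: r(2) cis_mult mult_ac add.commute)
  finally show ?thesis using r(1) \<open>z \<noteq> 0\<close> by (intro exI[of _ "cmod z * r"]) simp
qed

lemma sum_list_alternating_bounds:
  fixes f :: "real \<Rightarrow> real"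
  assumes "mono f" "length ts = Suc (length xs)"
    and "\<forall>i<length xs. ts ! i \<le> xs ! i \<and> xs ! i \<le> ts ! Suc i"
  shows "f (hd ts) \<le> (\<Sum>t\<leftarrow>ts. f t) - (\<Sum>x\<leftarrow>xs. f x) \<and>
         (\<Sum>t\<leftarrow>ts. f t) - (\<Sum>x\<leftarrow>xs. f x) \<le> f (last ts)"
  using assms(2,3)
proof (induction xs arbitrary: ts)
  case Nil
  then obtain t where "ts = [t]" by (cases ts) auto
  then show ?case by simp
next
  case (Cons x xs)
  then obtain t ts' where ts: "ts = t # ts'" by (cases ts) auto
  with Cons.prems(1) have "ts' \<noteq> []" by auto
  have "t \<le> x" "x \<le> hd ts'"
    using Cons.prems(2)[rule_format, of 0] ts \<open>ts' \<noteq> []\<close> by (auto simp: hd_conv_nth)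
  then have "f t \<le> f x" "f x \<le> f (hd ts')" using assms(1) by (auto dest: monoD)
  moreover have "f (hd ts') \<le> (\<Sum>t\<leftarrow>ts'. f t) - (\<Sum>x\<leftarrow>xs. f x) \<and>
                 (\<Sum>t\<leftarrow>ts'. f t) - (\<Sum>x\<leftarrow>xs. f x) \<le> f (last ts')"
    using Cons.prems ts by (intro Cons.IH) force+
  ultimately show ?case using ts \<open>ts' \<noteq> []\<close> by auto
qed

lemma arg_diff_bounds_if_interlaced:
  assumes "interlaced xs ts" "\<forall>t\<in>set ts. t \<le> 0" "Im z > 0"
  shows "0 \<le> arg_diff xs ts z \<and> arg_diff xs ts z \<le> ang z"
proof -
  define f where "f r = ang (z - of_real r)" for r
  have mono: "mono f" unfolding f_def mono_def using ang_diff_mono[OF assms(3)] by blast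
  have f_nonneg: "0 \<le> f r" for r using ang_bounds[of "z - of_real r"] assms(3) by (simp add: f_def)
  have f_0: "f 0 = ang z" by (simp add: f_def)
  have sum: "arg_sum l z = (\<Sum>x\<leftarrow>l. f x)" for l by (simp add: arg_sum_def f_def)
  from assms(1) consider
      (succ) "length ts = Suc (length xs)" "\<forall>i<length xs. ts ! i \<le> xs ! i \<and> xs ! i \<le> ts ! Suc i"
    | (equal) "length ts = length xs" "\<forall>i<length xs. xs ! i \<le> ts ! i"
        "\<forall>i. Suc i < length xs \<longrightarrow> ts ! i \<le> xs ! Suc i"
    unfolding interlaced_def by auto
  then show ?thesis
  proof cases
    case succ
    then have "ts \<noteq> []" by auto
    then have "f (last ts) \<le> f 0" using assms(2) mono by (auto dest: monoD)
    with succ show ?thesis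
      using sum_list_alternating_bounds[OF mono succ] f_nonneg[of "hd ts"]
      by (simp add: arg_diff_def sum f_0)
  next
    case equal
    txt \<open>With equal degrees, the zeros of \<open>G\<close> interlace those of \<open>x F\<close>, whose zero list
      is \<open>xs @ [0]\<close>.\<close>
    have "\<forall>i<length ts. (xs @ [0]) ! i \<le> ts ! i \<and> ts ! i \<le> (xs @ [0]) ! Suc i"
    proof (intro allI impI conjI)
      fix i assume i: "i < length ts"
      then show "(xs @ [0]) ! i \<le> ts ! i" using equal by (simp add: nth_append)
      show "ts ! i \<le> (xs @ [0]) ! Suc i"
      proof (cases "Suc i < length xs")
        case False
        then have "Suc i = length xs" using equal i by simp
        then show ?thesis using assms(2) i by (simp add: nth_append)
      qed (use equal in \<open>simp add: nth_append\<close>)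
    qed
    then have "f (hd (xs @ [0])) \<le> (\<Sum>x\<leftarrow>xs @ [0]. f x) - (\<Sum>t\<leftarrow>ts. f t) \<and>
               (\<Sum>x\<leftarrow>xs @ [0]. f x) - (\<Sum>t\<leftarrow>ts. f t) \<le> f (last (xs @ [0]))"
      using equal by (intro sum_list_alternating_bounds[OF mono]) auto
    then show ?thesis using f_nonneg[of "hd (xs @ [0])"] by (simp add: arg_diff_def sum f_0)
  qed
qed

lemma no_upper_roots_if_interlaces:
  fixes F G :: "real poly"
  assumes F: "standard_nonpos F" "F \<noteq> 0" and G: "standard_nonpos G" "G \<noteq> 0"
    and "F \<prec> G" "Im z > 0" "k > 0" "l > 0"
  shows "poly (cpoly (smult k F + smult l G)) z \<noteq> 0"
    and "poly (cpoly (smult k G + smult l ([:0, 1:] * F))) z \<noteq> 0"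
proof -
  have rr: "real_rooted F" "real_rooted G" using F G nonpos_rooted_imp_real_rooted by auto
  have lc: "lead_coeff F > 0" "lead_coeff G > 0" using F G by (auto simp: standard_def)
  define sF sG where "sF = arg_sum (zero_list F) z" and "sG = arg_sum (zero_list G) z"
  have "interlaced (zero_list F) (zero_list G)"
    using assms rr interlaces_iff_interlaced by blast
  moreover have "\<forall>t\<in>set (zero_list G). t \<le> 0" using G zero_list_nonpos by blast
  ultimately have "0 \<le> sG - sF \<and> sG - sF \<le> ang z"
    using arg_diff_bounds_if_interlaced assms(6) by (simp add: arg_diff_def sF_def sG_def)
  moreover have "0 < ang z \<and> ang z < pi" using ang_bounds assms(6) .
  ultimately have bounds: "\<bar>sF - sG\<bar> < pi" "\<bar>sG - (sF + ang z)\<bar> < pi" by auto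
  obtain rF where rF: "rF > 0" "poly (cpoly F) z = of_real rF * cis sF"
    using poly_cpoly_polar[OF rr(1) lc(1) assms(6)] unfolding sF_def by blast
  obtain rG where rG: "rG > 0" "poly (cpoly G) z = of_real rG * cis sG"
    using poly_cpoly_polar[OF rr(2) lc(2) assms(6)] unfolding sG_def by blast
  obtain rX where rX: "rX > 0" "poly (cpoly ([:0, 1:] * F)) z = of_real rX * cis (sF + ang z)"
    using poly_cpoly_X_polar[OF rr(1) lc(1) assms(6)] unfolding sF_def by blast
  show "poly (cpoly (smult k F + smult l G)) z \<noteq> 0"
    using cis_combination_neq_0[of "k * rF" "l * rG" sF sG] rF rG bounds assms(7,8)
    by (simp add: mult.assoc)
  show "poly (cpoly (smult k G + smult l ([:0, 1:] * F))) z \<noteq> 0"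
    using cis_combination_neq_0[of "k * rG" "l * rX" sG "sF + ang z"] rG rX bounds assms(7,8)
    by (simp add: mult.assoc)
qed

lemma combinations_if_interp_1cube:
  assumes "interp_1cube F G" "k > 0" "l > 0"
  shows "standard_nonpos (smult k F + smult l G) \<and>
         standard_nonpos (smult k G + smult l ([:0, 1:] * F))"
proof -
  from assms(1) have F: "standard_nonpos F" and G: "standard_nonpos G" and "F \<prec> G"
    unfolding interp_1cube_def by auto
  note coeffs = coeffs_nonneg_if_standard_nonpos[OF F] coeffs_nonneg_if_standard_nonpos[OF G]
  have "standard (smult k F + smult l G)" "standard (smult k G + smult l ([:0, 1:] * F))"
    using coeffs assms(2,3) by (auto intro!: standard_if_coeffs_nonneg simp: coeff_X_mult)
  moreover have "nonpos_rooted (smult k F + smult l G) \<and>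
                 nonpos_rooted (smult k G + smult l ([:0, 1:] * F))"
  proof (cases "F = 0 \<or> G = 0")
    case True
    then show ?thesis using F G assms(2,3) by (auto simp: nonpos_rooted_smult nonpos_rooted_X_mult)
  next
    case False
    have "poly F x > 0" "poly G x > 0" if "x > 0" for x
      using False coeffs that by (auto intro: poly_pos_if_coeffs_nonneg)
    then have pos: "poly (smult k F + smult l G) x > 0"
      "poly (smult k G + smult l ([:0, 1:] * F)) x > 0" if "x > 0" for x
      using that assms(2,3) by (simp_all add: add_pos_pos)
    note no_upper = no_upper_roots_if_interlaces[OF F _ G _ \<open>F \<prec> G\<close> _ assms(2,3)]
    show ?thesis
      unfolding nonpos_rooted_iff_upper_half_plane
      using False no_upper pos by (simp add: less_imp_neq[symmetric])
  qed
  ultimately show ?thesis by blast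
qed

section \<open>Argument bounds force interlacing\<close>

lemma length_le_count_above:
  fixes l :: "real list"
  assumes "sorted l" "i < length l" "x < l ! i"
  shows "length l \<le> i + length (filter ((<) x) l)"
proof -
  have "x < l ! k" if "i \<le> k" "k < length l" for k
    using assms(3) sorted_nth_mono[OF assms(1) that] by linarith
  then have "{i..<length l} \<subseteq> {j. j < length l \<and> x < l ! j}" by auto
  then have "card {i..<length l} \<le> card {j. j < length l \<and> x < l ! j}"
    by (intro card_mono) auto
  then show ?thesis by (simp add: length_filter_conv_card)
qed

lemma count_above_le:
  fixes l :: "real list"
  assumes "sorted l" "j < length l" "l ! j < x"
  shows "length (filter ((<) x) l) + Suc j \<le> length l"
proof -
  have "{k. k < length l \<and> x < l ! k} \<subseteq> {Suc j..<length l}"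
    using assms sorted_nth_mono[OF assms(1), of _ j] by (force simp: not_less_eq_eq)
  then have "card {k. k < length l \<and> x < l ! k} \<le> card {Suc j..<length l}"
    by (intro card_mono) auto
  then show ?thesis using assms(2) by (simp add: length_filter_conv_card)
qed

lemma sorted_nth_le_if_count_above_le:
  fixes xs ts :: "real list"
  assumes "sorted xs" "sorted ts"
    and counts: "\<forall>x. x \<notin> set xs \<longrightarrow> x \<notin> set ts \<longrightarrow>
                   length (filter ((<) x) xs) \<le> length (filter ((<) x) ts) + d"
    and "i < length xs" "j < length ts" "length ts + i + d \<le> length xs + j"
  shows "xs ! i \<le> ts ! j"
proof (rule ccontr)
  assume "\<not> xs ! i \<le> ts ! j"
  then have "infinite {ts ! j<..<xs ! i}" by (simp add: infinite_Ioo)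
  then have "\<not> {ts ! j<..<xs ! i} \<subseteq> set xs \<union> set ts" using infinite_super by blast
  then obtain x where "x \<in> {ts ! j<..<xs ! i}" "x \<notin> set xs \<union> set ts" by blast
  then have x: "ts ! j < x" "x < xs ! i" "x \<notin> set xs" "x \<notin> set ts" by auto
  have "length xs \<le> i + length (filter ((<) x) xs)"
    using assms(1,4) x(2) by (rule length_le_count_above)
  moreover have "length (filter ((<) x) ts) + Suc j \<le> length ts"
    using assms(2,5) x(1) by (rule count_above_le)
  ultimately show False using counts x(3,4) assms(6) by force
qed

lemma interlaced_if_counts:
  fixes xs ts :: "real list"
  assumes "sorted xs" "sorted ts"
    and counts: "\<forall>x. x \<notin> set xs \<longrightarrow> x \<notin> set ts \<longrightarrow>
           length (filter ((<) x) xs) \<le> length (filter ((<) x) ts) \<and>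
           length (filter ((<) x) ts) \<le> length (filter ((<) x) xs) + 1"
  shows "interlaced xs ts"
proof -
  define x0 where "x0 = Min (insert 0 (set xs \<union> set ts)) - 1"
  have below: "x0 < y" if "y \<in> set xs \<union> set ts" for y
  proof -
    have "Min (insert 0 (set xs \<union> set ts)) \<le> y" using that by (intro Min_le) auto
    then show ?thesis by (simp add: x0_def)
  qed
  then have "filter ((<) x0) xs = xs" "filter ((<) x0) ts = ts" by (auto simp: filter_id_conv)
  with counts below have lengths: "length xs \<le> length ts" "length ts \<le> length xs + 1"
    by (metis Un_iff less_irrefl)+
  have xs_le: "xs ! i \<le> ts ! j"
    if "i < length xs" "j < length ts" "length ts + i \<le> length xs + j" for i j
    using sorted_nth_le_if_count_above_le[OF assms(1,2), of 0] counts that by simp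
  have ts_le: "ts ! j \<le> xs ! i"
    if "j < length ts" "i < length xs" "length xs + j + 1 \<le> length ts + i" for i j
    using sorted_nth_le_if_count_above_le[OF assms(2,1), of 1] counts that by simp
  show ?thesis
  proof (cases "length ts = length xs + 1")
    case True
    then show ?thesis unfolding interlaced_def using xs_le ts_le by simp
  next
    case False
    with lengths have "length ts = length xs" by simp
    then show ?thesis unfolding interlaced_def using xs_le ts_le by simp
  qed
qed

lemma connected_abs_less:
  fixes g :: "'a::topological_space \<Rightarrow> real"
  assumes "connected S" "continuous_on S g" "z0 \<in> S" "\<bar>g z0\<bar> < c"
    and "\<forall>z\<in>S. \<bar>g z\<bar> \<noteq> c" "z \<in> S"
  shows "\<bar>g z\<bar> < c"
proof (rule ccontr)
  assume "\<not> \<bar>g z\<bar> < c"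
  have "connected ((\<lambda>z. \<bar>g z\<bar>) ` S)"
    using continuous_on_rabs[OF assms(2)] assms(1) by (rule connected_continuous_image)
  then have "c \<in> (\<lambda>z. \<bar>g z\<bar>) ` S"
    by (rule connectedD_interval[of _ "\<bar>g z0\<bar>" "\<bar>g z\<bar>"])
      (use assms(3,4,6) \<open>\<not> \<bar>g z\<bar> < c\<close> in auto)
  with assms(5) show False by auto
qed

lemma abs_le_at_real_point:
  fixes g :: "complex \<Rightarrow> real"
  assumes "isCont g (of_real x)" "\<And>z. Im z > 0 \<Longrightarrow> \<bar>g z\<bar> < c"
  shows "\<bar>g (of_real x)\<bar> \<le> c"
proof (rule tendsto_upperbound)
  have "((\<lambda>t. of_real x + \<i> * of_real t) \<longlongrightarrow> of_real x + \<i> * of_real 0) (at_right (0::real))"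
    by (intro tendsto_intros)
  then show "((\<lambda>t. \<bar>g (of_real x + \<i> * of_real t)\<bar>) \<longlongrightarrow> \<bar>g (of_real x)\<bar>) (at_right 0)"
    by (intro tendsto_rabs isCont_tendsto_compose[OF assms(1)]) simp
  have "\<bar>g (of_real x + \<i> * of_real t)\<bar> \<le> c" if "t > 0" for t
    using assms(2)[of "of_real x + \<i> * of_real t"] that by simp
  then show "\<forall>\<^sub>F t in at_right 0. \<bar>g (of_real x + \<i> * of_real t)\<bar> \<le> c"
    by (rule eventually_mono[OF eventually_at_right_less])
qed simp

lemma connected_upper_half_plane_positive_axis:
  "connected ({z. Im z > 0} \<union> {z. Re z > 0 \<and> Im z \<ge> 0})"
proof (rule connected_Un)
  have "1 + \<i> \<in> {z. Im z > 0} \<inter> {z. Re z > 0 \<and> Im z \<ge> 0}" by simp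
  then show "{z. Im z > 0} \<inter> {z. Re z > 0 \<and> Im z \<ge> 0} \<noteq> {}" by blast
  have "{z. Re z > 0 \<and> Im z \<ge> 0} = {z. Re z > 0} \<inter> {z. Im z \<ge> 0}" by blast
  then show "connected {z. Re z > 0 \<and> Im z \<ge> 0}"
    using convex_Int[OF convex_halfspace_Re_gt convex_halfspace_Im_ge] convex_connected
    by metis
qed (simp add: convex_connected convex_halfspace_Im_gt)

lemma continuous_on_arg_diff:
  assumes "\<forall>x\<in>set xs \<union> set ts \<union> {0}. of_real x \<notin> U"
  shows "continuous_on U (arg_diff xs ts)" "continuous_on U (\<lambda>z. arg_diff xs ts z - ang z)"
  using assms unfolding arg_diff_def[abs_def]
  by (auto intro!: continuous_intros continuous_on_arg_sum
      intro: continuous_on_subset[OF continuous_on_ang])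

lemma arg_diff_bounded_if_avoids_pi:
  fixes xs ts :: "real list"
  assumes "\<forall>x\<in>set xs. x \<le> 0" "\<forall>t\<in>set ts. t \<le> 0"
    and avoid: "\<And>w. Im w > 0 \<Longrightarrow> \<bar>arg_diff xs ts w\<bar> \<noteq> pi \<and> \<bar>arg_diff xs ts w - ang w\<bar> \<noteq> pi"
    and "Im z > 0"
  shows "\<bar>arg_diff xs ts z\<bar> < pi \<and> \<bar>arg_diff xs ts z - ang z\<bar> < pi"
proof -
  txt \<open>Both functions vanish on the positive real axis, which joins the upper half-plane to
    the real point \<open>1\<close>.\<close>
  define S where "S = {z. Im z > 0} \<union> {z. Re z > 0 \<and> Im z \<ge> 0}"
  have on_pos_reals: "arg_diff xs ts (of_real x) = 0" "ang (of_real x) = 0" if "x > 0" for x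
  proof -
    have "x \<notin> set xs" "x \<notin> set ts" using that assms(1,2) by auto
    moreover have "filter ((<) x) xs = []" "filter ((<) x) ts = []"
      using that assms(1,2) by (auto simp: filter_empty_conv)
    ultimately show "arg_diff xs ts (of_real x) = 0" by (simp add: arg_diff_of_real)
    show "ang (of_real x) = 0" using that by (simp add: ang_of_real)
  qed
  have "\<forall>x\<in>set xs \<union> set ts \<union> {0}. of_real x \<notin> S" using assms(1,2) by (auto simp: S_def)
  note S_cont = continuous_on_arg_diff[OF this]
  have S_avoid: "\<bar>arg_diff xs ts w\<bar> \<noteq> pi \<and> \<bar>arg_diff xs ts w - ang w\<bar> \<noteq> pi" if w: "w \<in> S" for w
  proof (cases "Im w > 0")
    case False
    with w have "w = of_real (Re w)" "Re w > 0" by (auto simp: S_def complex_eq_iff)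
    then show ?thesis using on_pos_reals[of "Re w"] by simp
  qed (use avoid in blast)
  have "connected S" unfolding S_def by (rule connected_upper_half_plane_positive_axis)
  moreover have "1 \<in> S" "z \<in> S" using assms(4) by (auto simp: S_def)
  moreover have "arg_diff xs ts 1 = 0" "ang 1 = 0" using on_pos_reals[of 1] by simp_all
  ultimately show ?thesis
    using connected_abs_less[OF _ S_cont(1), of 1 pi z] connected_abs_less[OF _ S_cont(2), of 1 pi z]
      S_avoid
    by simp
qed

lemma interlaced_if_arg_diff_avoids_pi:
  fixes xs ts :: "real list"
  assumes "sorted xs" "sorted ts" "\<forall>x\<in>set xs. x \<le> 0" "\<forall>t\<in>set ts. t \<le> 0"
    and avoid: "\<And>w. Im w > 0 \<Longrightarrow> \<bar>arg_diff xs ts w\<bar> \<noteq> pi \<and> \<bar>arg_diff xs ts w - ang w\<bar> \<noteq> pi"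
  shows "interlaced xs ts"
proof (rule interlaced_if_counts[OF assms(1,2)], intro allI impI)
  fix x
  assume x: "x \<notin> set xs" "x \<notin> set ts"
  define d where "d = real (length (filter ((<) x) ts)) - real (length (filter ((<) x) xs))"
  have "0 \<le> d \<and> d \<le> 1"
  proof (cases "x < 0")
    case True
    define U :: "complex set" where "U = - (of_real ` (set xs \<union> set ts \<union> {0}))"
    have "open U" unfolding U_def by (intro open_Compl finite_imp_closed) auto
    moreover have "of_real x \<in> U" using x True by (auto simp: U_def)
    moreover have "\<forall>x\<in>set xs \<union> set ts \<union> {0}. of_real x \<notin> U" by (simp add: U_def)
    note U_cont = continuous_on_arg_diff[OF this]
    ultimately have "isCont (arg_diff xs ts) (of_real x)"
      "isCont (\<lambda>z. arg_diff xs ts z - ang z) (of_real x)"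
      using U_cont continuous_on_eq_continuous_at by blast+
    then have "\<bar>arg_diff xs ts (of_real x)\<bar> \<le> pi"
      "\<bar>arg_diff xs ts (of_real x) - ang (of_real x)\<bar> \<le> pi"
      using arg_diff_bounded_if_avoids_pi[OF assms(3,4) avoid]
      by (auto intro!: abs_le_at_real_point)
    moreover have "arg_diff xs ts (of_real x) = pi * d" "ang (of_real x) = pi"
      using x True by (simp_all add: arg_diff_of_real d_def ang_of_real)
    ultimately have "pi * \<bar>d\<bar> \<le> pi * 1" "pi * \<bar>d - 1\<bar> \<le> pi * 1"
      by (simp_all add: abs_mult right_diff_distrib)
    then have "\<bar>d\<bar> \<le> 1" "\<bar>d - 1\<bar> \<le> 1"
      by (simp_all only: mult_le_cancel_left_pos[OF pi_gt_zero])
    then show ?thesis by linarith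
  next
    case False
    then have "filter ((<) x) xs = []" "filter ((<) x) ts = []"
      using x assms(3,4) by (force simp: filter_empty_conv)+
    then show ?thesis by (simp add: d_def)
  qed
  then show "length (filter ((<) x) xs) \<le> length (filter ((<) x) ts) \<and>
    length (filter ((<) x) ts) \<le> length (filter ((<) x) xs) + 1"
    unfolding d_def by linarith
qed

lemma arg_diff_avoids_pi_if_no_upper_roots:
  fixes F G :: "real poly"
  assumes F: "real_rooted F" "lead_coeff F > 0" and G: "real_rooted G" "lead_coeff G > 0"
    and z: "Im z > 0"
    and no_roots: "\<And>c. c > 0 \<Longrightarrow> poly (cpoly (smult c F + G)) z \<noteq> 0"
      "\<And>c. c > 0 \<Longrightarrow> poly (cpoly (G + smult c ([:0, 1:] * F))) z \<noteq> 0"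
  shows "\<bar>arg_diff (zero_list F) (zero_list G) z\<bar> \<noteq> pi \<and>
         \<bar>arg_diff (zero_list F) (zero_list G) z - ang z\<bar> \<noteq> pi"
proof -
  define sF sG where "sF = arg_sum (zero_list F) z" and "sG = arg_sum (zero_list G) z"
  obtain rF where rF: "rF > 0" "poly (cpoly F) z = of_real rF * cis sF"
    using poly_cpoly_polar[OF F z] unfolding sF_def by blast
  obtain rG where rG: "rG > 0" "poly (cpoly G) z = of_real rG * cis sG"
    using poly_cpoly_polar[OF G z] unfolding sG_def by blast
  obtain rX where rX: "rX > 0" "poly (cpoly ([:0, 1:] * F)) z = of_real rX * cis (sF + ang z)"
    using poly_cpoly_X_polar[OF F z] unfolding sF_def by blast
  have "\<bar>sG - sF\<bar> \<noteq> pi"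
  proof
    assume "\<bar>sG - sF\<bar> = pi"
    then obtain c where "c > 0" "of_real rG * cis sG + of_real c * (of_real rF * cis sF) = 0"
      using cis_combination_eq_0 rF(1) rG(1) by blast
    with no_roots(1)[of c] rF(2) rG(2) show False by (simp add: add.commute)
  qed
  moreover have "\<bar>sG - (sF + ang z)\<bar> \<noteq> pi"
  proof
    assume "\<bar>sG - (sF + ang z)\<bar> = pi"
    then obtain c
      where "c > 0" "of_real rG * cis sG + of_real c * (of_real rX * cis (sF + ang z)) = 0"
      using cis_combination_eq_0 rX(1) rG(1) by blast
    with no_roots(2)[of c] rX(2) rG(2) show False by simp
  qed
  ultimately show ?thesis by (simp add: arg_diff_def sF_def sG_def diff_diff_eq)
qed

lemma interlaces_if_no_upper_roots:
  fixes F G :: "real poly"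
  assumes F: "standard_nonpos F" "F \<noteq> 0" and G: "standard_nonpos G" "G \<noteq> 0"
    and no_roots: "\<And>c z. c > 0 \<Longrightarrow> Im z > 0 \<Longrightarrow> poly (cpoly (smult c F + G)) z \<noteq> 0"
      "\<And>c z. c > 0 \<Longrightarrow> Im z > 0 \<Longrightarrow> poly (cpoly (G + smult c ([:0, 1:] * F))) z \<noteq> 0"
  shows "F \<prec> G"
proof -
  have rr: "real_rooted F" "real_rooted G" using F G nonpos_rooted_imp_real_rooted by blast+
  have lc: "lead_coeff F > 0" "lead_coeff G > 0" using F G by (simp_all add: standard_def)
  have "interlaced (zero_list F) (zero_list G)"
  proof (rule interlaced_if_arg_diff_avoids_pi)
    show "sorted (zero_list F)" "sorted (zero_list G)" using rr F G by (simp_all add: zero_list)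
    show "\<forall>x\<in>set (zero_list F). x \<le> 0" "\<forall>t\<in>set (zero_list G). t \<le> 0"
      using F G zero_list_nonpos by blast+
    show "\<bar>arg_diff (zero_list F) (zero_list G) w\<bar> \<noteq> pi \<and>
          \<bar>arg_diff (zero_list F) (zero_list G) w - ang w\<bar> \<noteq> pi" if "Im w > 0" for w
      using arg_diff_avoids_pi_if_no_upper_roots[OF rr(1) lc(1) rr(2) lc(2) that] no_roots that
      by blast
  qed
  then show ?thesis using interlaces_iff_interlaced rr F(2) G(2) by blast
qed

section \<open>Limits of polynomials with nonpositive zeros\<close>

lemma coeff_nonneg_limit:
  assumes "\<And>e. e > 0 \<Longrightarrow> coeff (F + smult e G) i \<ge> (0::real)"
  shows "coeff F i \<ge> 0"
proof (rule tendsto_lowerbound)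
  have "((\<lambda>e. coeff F i + e * coeff G i) \<longlongrightarrow> coeff F i + 0 * coeff G i) (at_right 0)"
    by (intro tendsto_intros)
  then show "((\<lambda>e. coeff (F + smult e G) i) \<longlongrightarrow> coeff F i) (at_right 0)" by simp
  show "\<forall>\<^sub>F e in at_right 0. 0 \<le> coeff (F + smult e G) i"
    using assms by (rule eventually_mono[OF eventually_at_right_less])
qed simp

lemma norm_poly_real_rooted_mono:
  assumes "real_rooted p" "0 \<le> y1" "y1 \<le> y2"
  shows "cmod (poly (cpoly p) (Complex u y1)) \<le> cmod (poly (cpoly p) (Complex u y2))"
proof (cases "p = 0")
  case False
  have "cmod (\<Prod>x\<leftarrow>xs. Complex u y1 - of_real x) \<le> cmod (\<Prod>x\<leftarrow>xs. Complex u y2 - of_real x)"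
    for xs :: "real list"
  proof (induction xs)
    case (Cons x xs)
    have "cmod (Complex u y1 - of_real x) \<le> cmod (Complex u y2 - of_real x)"
      using assms(2,3) by (simp add: cmod_def power_mono)
    with Cons show ?case by (simp add: norm_mult mult_mono)
  qed simp
  with assms(1) False show ?thesis
    by (simp add: poly_cpoly_zero_list norm_mult mult_left_mono)
qed simp

lemma norm_poly_mono_limit:
  assumes "\<And>e. e > 0 \<Longrightarrow> real_rooted (F + smult e G)" "0 \<le> y1" "y1 \<le> y2"
  shows "cmod (poly (cpoly F) (Complex u y1)) \<le> cmod (poly (cpoly F) (Complex u y2))"
proof (rule tendsto_le[OF trivial_limit_at_right_real])
  define f where "f e w = cmod (poly (cpoly F) w + of_real e * poly (cpoly G) w)" for e w
  have "((\<lambda>e. f e w) \<longlongrightarrow> cmod (poly (cpoly F) w + of_real 0 * poly (cpoly G) w)) (at_right 0)"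
    for w unfolding f_def by (intro tendsto_intros)
  then show "((\<lambda>e. f e (Complex u y1)) \<longlongrightarrow> cmod (poly (cpoly F) (Complex u y1))) (at_right 0)"
    "((\<lambda>e. f e (Complex u y2)) \<longlongrightarrow> cmod (poly (cpoly F) (Complex u y2))) (at_right 0)"
    by simp_all
  have "f e (Complex u y1) \<le> f e (Complex u y2)" if "e > 0" for e
    using norm_poly_real_rooted_mono[OF assms(1)[OF that] assms(2,3)] by (simp add: f_def)
  then show "\<forall>\<^sub>F e in at_right 0. f e (Complex u y1) \<le> f e (Complex u y2)"
    by (rule eventually_mono[OF eventually_at_right_less])
qed

lemma standard_nonpos_limit:
  assumes "\<And>e. e > 0 \<Longrightarrow> standard_nonpos (F + smult e G)"
  shows "standard_nonpos F"
proof -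
  have coeffs: "\<forall>i. coeff F i \<ge> 0"
    using assms coeffs_nonneg_if_standard_nonpos by (blast intro: coeff_nonneg_limit)
  have "poly (cpoly F) z \<noteq> 0" if "F \<noteq> 0" "Im z > 0" for z
  proof
    assume root: "poly (cpoly F) z = 0"
    txt \<open>Then \<open>F\<close> vanishes on the whole segment from \<open>Re z\<close> to \<open>z\<close>.\<close>
    have "(\<lambda>y. Complex (Re z) y) ` {0..Im z} \<subseteq> {w. poly (cpoly F) w = 0}"
    proof clarify
      fix y assume "y \<in> {0..Im z}"
      then have "cmod (poly (cpoly F) (Complex (Re z) y)) \<le> cmod (poly (cpoly F) z)"
        using norm_poly_mono_limit[of F G y "Im z" "Re z"] assms nonpos_rooted_imp_real_rooted
        by simp
      with root show "poly (cpoly F) (Complex (Re z) y) = 0" by simp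
    qed
    moreover have "infinite ((\<lambda>y. Complex (Re z) y) ` {0..Im z})"
      using that by (subst finite_image_iff) (auto simp: inj_on_def infinite_Icc)
    moreover have "finite {w. poly (cpoly F) w = 0}"
      using that by (intro poly_roots_finite) (simp add: map_poly_eq_0_iff)
    ultimately show False using finite_subset by blast
  qed
  moreover have "poly F x \<noteq> 0" if "F \<noteq> 0" "x > 0" for x
    using poly_pos_if_coeffs_nonneg[OF that(1) coeffs that(2)] by simp
  ultimately have "nonpos_rooted F" unfolding nonpos_rooted_iff_upper_half_plane by blast
  with coeffs show ?thesis by (blast intro: standard_if_coeffs_nonneg)
qed

section \<open>The characterisation and the theorem\<close>

lemma interp_1cube_zero_iff:
  fixes F G :: "real poly"
  shows "interp_1cube 0 G \<longleftrightarrow> standard_nonpos G" "interp_1cube F 0 \<longleftrightarrow> standard_nonpos F"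
proof -
  have "standard 0" "nonpos_rooted 0" "real_rooted 0"
    by (simp_all add: standard_def nonpos_rooted_def real_rooted_def)
  moreover have "0 \<prec> G \<longleftrightarrow> real_rooted G" "F \<prec> 0 \<longleftrightarrow> real_rooted F"
    using \<open>real_rooted 0\<close> by (simp_all add: interlaces_def)
  ultimately show "interp_1cube 0 G \<longleftrightarrow> standard_nonpos G" "interp_1cube F 0 \<longleftrightarrow> standard_nonpos F"
    unfolding interp_1cube_def using nonpos_rooted_imp_real_rooted by blast+
qed

lemma interp_1cube_if_combinations:
  fixes F G :: "real poly"
  assumes comb: "\<And>k l. k > 0 \<Longrightarrow> l > 0 \<Longrightarrow>
    standard_nonpos (smult k F + smult l G) \<and> standard_nonpos (smult k G + smult l ([:0, 1:] * F))"
  shows "interp_1cube F G"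
proof -
  have perturbed: "standard_nonpos (F + smult e G)" "standard_nonpos (G + smult e F)"
    if "e > 0" for e
    using comb[of 1 e] comb[of e 1] that by (simp_all add: add.commute)
  have F: "standard_nonpos F" using perturbed(1) by (rule standard_nonpos_limit)
  have G: "standard_nonpos G" using perturbed(2) by (rule standard_nonpos_limit)
  consider (F0) "F = 0" | (G0) "G = 0" | (nz) "F \<noteq> 0" "G \<noteq> 0" by blast
  then show ?thesis
  proof cases
    case nz
    have "\<forall>i. coeff F i \<ge> 0" "\<forall>i. coeff G i \<ge> 0"
      using F G coeffs_nonneg_if_standard_nonpos by blast+
    then have "poly F 1 > 0" "poly G 1 > 0" using nz by (simp_all add: poly_pos_if_coeffs_nonneg)
    have no_roots: "poly (cpoly (smult c F + G)) z \<noteq> 0"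
      "poly (cpoly (G + smult c ([:0, 1:] * F))) z \<noteq> 0" if "c > 0" "Im z > 0" for c z
    proof -
      have "poly (smult c F + G) 1 > 0" "poly (G + smult c ([:0, 1:] * F)) 1 > 0"
        using \<open>poly F 1 > 0\<close> \<open>poly G 1 > 0\<close> that(1) by (simp_all add: add_pos_pos)
      then have "smult c F + G \<noteq> 0" "G + smult c ([:0, 1:] * F) \<noteq> 0"
        by (metis less_irrefl poly_0)+
      moreover have "nonpos_rooted (smult c F + G)" "nonpos_rooted (G + smult c ([:0, 1:] * F))"
        using comb[of c 1] comb[of 1 c] that(1) by simp_all
      ultimately show "poly (cpoly (smult c F + G)) z \<noteq> 0"
        "poly (cpoly (G + smult c ([:0, 1:] * F))) z \<noteq> 0"
        using that(2) unfolding nonpos_rooted_iff_upper_half_plane by blast+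
    qed
    have "F \<prec> G" using interlaces_if_no_upper_roots[OF F nz(1) G nz(2)] no_roots by blast
    with F G show ?thesis unfolding interp_1cube_def by blast
  qed (use F G in \<open>simp_all add: interp_1cube_zero_iff\<close>)
qed

theorem interp_1cube_iff_combinations:
  "interp_1cube F G \<longleftrightarrow>
     (\<forall>k l. k > 0 \<longrightarrow> l > 0 \<longrightarrow>
        standard_nonpos (smult k F + smult l G) \<and>
        standard_nonpos (smult k G + smult l ([:0, 1:] * F)))"
  using combinations_if_interp_1cube interp_1cube_if_combinations by blast

lemma interp_1cube_pairs_transpose:
  fixes A B P Q :: "real poly"
  assumes "\<forall>lam rho::real. lam > 0 \<longrightarrow> rho > 0 \<longrightarrow>
      interp_1cube (smult lam A + smult rho B) (smult lam P + smult rho Q) \<and>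
      interp_1cube (smult lam B + smult rho ([:0, 1:] * A)) (smult lam Q + smult rho ([:0, 1:] * P))"
  shows "\<forall>lam rho::real. lam > 0 \<longrightarrow> rho > 0 \<longrightarrow>
      interp_1cube (smult lam A + smult rho P) (smult lam B + smult rho Q) \<and>
      interp_1cube (smult lam P + smult rho ([:0, 1:] * A)) (smult lam Q + smult rho ([:0, 1:] * B))"
proof (intro allI impI conjI)
  fix kap pi :: real
  assume "kap > 0" "pi > 0"
  then have combs:
    "standard_nonpos
       (smult kap (smult lam A + smult rho B) + smult pi (smult lam P + smult rho Q))"
    "standard_nonpos
       (smult kap (smult lam P + smult rho Q) + smult pi ([:0, 1:] * (smult lam A + smult rho B)))"
    "standard_nonpos
       (smult kap (smult lam B + smult rho ([:0, 1:] * A)) +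
        smult pi (smult lam Q + smult rho ([:0, 1:] * P)))"
    "standard_nonpos
       (smult kap (smult lam Q + smult rho ([:0, 1:] * P)) +
        smult pi ([:0, 1:] * (smult lam B + smult rho ([:0, 1:] * A))))"
    if "lam > 0" "rho > 0" for lam rho
    using assms that unfolding interp_1cube_iff_combinations by blast+
  have regroup:
    "smult lam (smult kap A + smult pi P) + smult rho (smult kap B + smult pi Q) =
     smult kap (smult lam A + smult rho B) + smult pi (smult lam P + smult rho Q)"
    "smult lam (smult kap B + smult pi Q) + smult rho ([:0, 1:] * (smult kap A + smult pi P)) =
     smult kap (smult lam B + smult rho ([:0, 1:] * A)) +
       smult pi (smult lam Q + smult rho ([:0, 1:] * P))"
    "smult lam (smult kap P + smult pi ([:0, 1:] * A)) +
       smult rho (smult kap Q + smult pi ([:0, 1:] * B)) =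
     smult kap (smult lam P + smult rho Q) + smult pi ([:0, 1:] * (smult lam A + smult rho B))"
    "smult lam (smult kap Q + smult pi ([:0, 1:] * B)) +
       smult rho ([:0, 1:] * (smult kap P + smult pi ([:0, 1:] * A))) =
     smult kap (smult lam Q + smult rho ([:0, 1:] * P)) +
       smult pi ([:0, 1:] * (smult lam B + smult rho ([:0, 1:] * A)))"
    for lam rho
    by (simp_all add: smult_add_right smult_smult algebra_simps)
  show "interp_1cube (smult kap A + smult pi P) (smult kap B + smult pi Q)"
    "interp_1cube (smult kap P + smult pi ([:0, 1:] * A)) (smult kap Q + smult pi ([:0, 1:] * B))"
    unfolding interp_1cube_iff_combinations regroup using combs by blast+
qed

theorem proposition4p1:
  fixes A B P Q :: "real poly"
  shows "(\<forall>lam rho::real. lam > 0 \<longrightarrow> rho > 0 \<longrightarrow>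
            interp_1cube (smult lam A + smult rho B) (smult lam P + smult rho Q) \<and>
            interp_1cube (smult lam B + smult rho ([:0, 1:] * A)) (smult lam Q + smult rho ([:0, 1:] * P)))
     \<longleftrightarrow>
         (\<forall>kap pi::real. kap > 0 \<longrightarrow> pi > 0 \<longrightarrow>
            interp_1cube (smult kap A + smult pi P) (smult kap B + smult pi Q) \<and>
            interp_1cube (smult kap P + smult pi ([:0, 1:] * A)) (smult kap Q + smult pi ([:0, 1:] * B)))"
  using interp_1cube_pairs_transpose[of A B P Q] interp_1cube_pairs_transpose[of A P B Q] by blast

end
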